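(* Let $b>0$, $p_0>0$, $\alpha\in(1,2)$, and let $(p_\ell)_{\ell\ge1}$ be a probability distribution on $\{1,2,\dots\}$ with $p_\ell\sim p_0\ell^{-(1+\alpha)}$ as $\ell\to\infty$. Let $k,j\in\mathbb N$ with $k\ge j\ge2$ and let $c_0>0$. For $K\ge1$ and $n\ge c_0/2$ define \[R_j(K,n)=K^\alpha nb\sum_{\ell\ge j-1}p_\ell\,\frac{\binom{Kn+\ell-k}{\ell+1-j}}{\binom{Kn+\ell}{\ell+1}},\qquad R_j(n)=\frac{p_0b}{n^{\alpha-1}}\int_0^1u^j(1-u)^{k-j}\frac{u^{1-\alpha}(1-u)^{\alpha-1}}{u^2}\,du.\] Then $R_j(K,n)\to R_j(n)$ as $K\to\infty$, uniformly in $n\ge c_0/2$.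
   Context: Binomial coefficients with non-integer upper argument are understood in the generalized sense $\binom{x}{r}=\frac{x(x-1)\cdots(x-r+1)}{r!}$ (equivalently via Gamma functions), for real $x$ and nonnegative integer $r$. *)

theory Defs
  imports "HOL-Analysis.Analysis" "HOL-Library.Landau_Symbols"
begin

definition RjK :: "(nat \<Rightarrow> real) \<Rightarrow> real \<Rightarrow> real \<Rightarrow> nat \<Rightarrow> nat \<Rightarrow> real \<Rightarrow> real \<Rightarrow> real" where
  "RjK p \<alpha> b k j K n =
     K powr \<alpha> * n * b *
     (\<Sum>i. let l = i + (j - 1) in
        p l * (((K * n + real l - real k) gchoose (l + 1 - j))
               / ((K * n + real l) gchoose (l + 1))))"

definition Rjn :: "real \<Rightarrow> real \<Rightarrow> real \<Rightarrow> nat \<Rightarrow> nat \<Rightarrow> real \<Rightarrow> real" where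
  "Rjn p0 \<alpha> b k j n =
     p0 * b / n powr (\<alpha> - 1) *
     integral {0..1} (\<lambda>u. u ^ j * (1 - u) ^ (k - j) *
                          (u powr (1 - \<alpha>) * (1 - u) powr (\<alpha> - 1)) / u ^ 2)"

end

theory Submission
  imports Defs
begin

(* With N = K n one has R_j(K,n) = b n^(1-alpha) * N^alpha S(N) and R_j(n) = b n^(1-alpha) p0 I,
   where S(N) is the series in R_j(K,n) and I the integral in R_j(n).  As n^(1-alpha) is bounded
   on n >= c0/2 and K n >= K c0/2, uniformity reduces to N^alpha S(N) --> p0 I as N --> oo.

   The binomial ratio in S(N) is the falling-factorial ratio
   (l+1)^(j falling) (N-1)^(k-j falling) / (N+l)^(k falling).  The cells
   [l/(N+l), (l+1)/(N+l+1)), on which floor (N u/(1-u)) = l, partition [0,1); the step function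
   that is constant on each cell, with area the l-th term of N^alpha S(N), converges pointwise to
   p0 times the integrand of I, because l ~ N u/(1-u) and p_l l^(1+alpha) --> p0.  It is
   dominated by a multiple of u^(1-alpha), integrable as alpha < 2, so dominated convergence
   gives the limit. *)

section \<open>Falling factorials\<close>

definition ffact :: "'a::comm_ring_1 \<Rightarrow> nat \<Rightarrow> 'a" where
  "ffact a n = (\<Prod>i<n. a - of_nat i)"

lemma gbinomial_ffact: "(a :: 'a :: field_char_0) gchoose n = ffact a n / fact n"
  using gbinomial_mult_fact'[of a n] by (simp add: ffact_def atLeast0LessThan field_simps)

lemma ffact_add: "ffact a (m + n) = ffact a m * ffact (a - of_nat m) n"
  by (induction n) (auto simp: ffact_def algebra_simps)

lemma ffact_of_nat: "ffact (of_nat n :: 'a::{comm_ring_1,semiring_char_0}) n = fact n"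
proof (induction n)
  case (Suc n)
  have "ffact (of_nat (Suc n) :: 'a) (1 + n) = ffact (of_nat (Suc n)) 1 * ffact (of_nat (Suc n) - 1) n"
    using ffact_add[of "of_nat (Suc n) :: 'a" 1 n] by simp
  also have "\<dots> = of_nat (Suc n) * ffact (of_nat n) n"
    by (simp add: ffact_def)
  finally show ?case using Suc by simp
qed (simp add: ffact_def)

lemma fact_add_eq_ffact_mult_fact:
  "fact (m + n) = ffact (of_nat (m + n) :: 'a::{comm_ring_1,semiring_char_0}) n * fact m"
proof -
  have "fact (m + n) = ffact (of_nat (m + n) :: 'a) (n + m)"
    by (metis ffact_of_nat add.commute)
  also have "\<dots> = ffact (of_nat (m + n)) n * ffact (of_nat (m + n) - of_nat n) m"
    by (rule ffact_add)
  finally show ?thesis by (simp add: ffact_of_nat)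
qed

lemma ffact_pos: "of_nat n < a + 1 \<Longrightarrow> 0 < ffact (a :: 'a::linordered_idom) n"
  unfolding ffact_def
proof (intro prod_pos)
  fix i assume "of_nat n < a + 1" "i \<in> {..<n}"
  then have "of_nat i + 1 < a + (1 :: 'a)"
    by (metis lessThan_iff of_nat_Suc add.commute order.strict_trans1 Suc_leI of_nat_le_iff)
  then show "0 < a - of_nat i" by simp
qed

lemma ffact_le_power:
  assumes "of_nat n \<le> a + 1" "a \<le> c"
  shows "ffact (a :: 'a::linordered_idom) n \<le> c ^ n"
proof -
  have "ffact a n \<le> (\<Prod>i<n. c)"
    unfolding ffact_def
  proof (intro prod_mono conjI)
    fix i assume "i \<in> {..<n}"
    then have "of_nat i + 1 \<le> (of_nat n :: 'a)"
      by (metis lessThan_iff Suc_leI of_nat_Suc of_nat_le_iff add.commute)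
    moreover have "0 \<le> (of_nat i :: 'a)" by simp
    ultimately show "0 \<le> a - of_nat i" "a - of_nat i \<le> c"
      using assms by linarith+
  qed
  then show ?thesis by simp
qed

lemma power_le_ffact:
  assumes "0 \<le> c" "c + of_nat n \<le> a + 1"
  shows "c ^ n \<le> ffact (a :: 'a::linordered_idom) n"
proof -
  have "(\<Prod>i<n. c) \<le> ffact a n"
    unfolding ffact_def
  proof (intro prod_mono conjI)
    fix i assume "i \<in> {..<n}"
    then have "of_nat i + 1 \<le> (of_nat n :: 'a)"
      by (metis lessThan_iff Suc_leI of_nat_Suc of_nat_le_iff add.commute)
    then show "0 \<le> c" "c \<le> a - of_nat i"
      using assms by simp_all
  qed
  then show ?thesis by simp
qed

lemma ffact_divide_power:
  "N \<noteq> 0 \<Longrightarrow> ffact a n / N ^ n = (\<Prod>i<n. a / N - of_nat i / N :: 'a::field)"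
  by (induction n) (simp_all add: ffact_def field_simps)

lemma tendsto_ffact_divide_power:
  fixes x :: "real \<Rightarrow> real"
  assumes "((\<lambda>N. x N / N) \<longlongrightarrow> y) at_top"
  shows "((\<lambda>N. ffact (x N) n / N ^ n) \<longlongrightarrow> y ^ n) at_top"
proof -
  have "((\<lambda>N. real i / N) \<longlongrightarrow> 0) at_top" for i
    by (intro tendsto_divide_0[OF tendsto_const] filterlim_at_top_imp_at_infinity filterlim_ident)
  then have "((\<lambda>N. \<Prod>i<n. x N / N - real i / N) \<longlongrightarrow> (\<Prod>i<n. y - 0)) at_top"
    by (intro tendsto_prod tendsto_diff assms)
  moreover have "\<forall>\<^sub>F N in at_top. (\<Prod>i<n. x N / N - real i / N) = ffact (x N) n / N ^ n"
    using eventually_gt_at_top[of 0] by eventually_elim (simp add: ffact_divide_power)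
  ultimately show ?thesis by (simp add: tendsto_cong)
qed

lemma gbinomial_ratio_eq_ffact:
  fixes N :: real
  assumes "j \<le> l + 1" "j \<le> k" "real k < N"
  shows "((N + real l - real k) gchoose (l + 1 - j)) / ((N + real l) gchoose (l + 1))
       = ffact (real l + 1) j * ffact (N - 1) (k - j) / ffact (N + real l) k"
proof -
  define m where "m = l + 1 - j"
  define x where "x = N + real l"
  have "ffact x k * ffact (x - real k) m = ffact x (k + m)"
    by (simp add: ffact_add)
  also have "k + m = (l + 1) + (k - j)"
    using assms unfolding m_def by simp
  also have "ffact x \<dots> = ffact x (l + 1) * ffact (N - 1) (k - j)"
    unfolding ffact_add x_def by (simp add: algebra_simps)
  finally have num: "ffact (x - real k) m = ffact x (l + 1) * ffact (N - 1) (k - j) / ffact x k"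
    using ffact_pos[of k x] assms by (simp add: x_def field_simps)
  have den: "fact (l + 1) = ffact (real l + 1) j * (fact m :: real)"
    using fact_add_eq_ffact_mult_fact[of m j] assms by (simp add: m_def add.commute)
  have "ffact x (l + 1) \<noteq> 0"
    using ffact_pos[of "l + 1" x] assms by (simp add: x_def)
  then show ?thesis
    using num den unfolding gbinomial_ffact m_def[symmetric] x_def[symmetric]
    by (simp add: field_simps)
qed

definition ffact_ratio :: "nat \<Rightarrow> nat \<Rightarrow> real \<Rightarrow> nat \<Rightarrow> real" where
  "ffact_ratio j k N l = ffact (real l + 1) j * ffact (N - 1) (k - j) / ffact (N + real l) k"

lemma ffact_ratio_nonneg:
  assumes "j \<le> l + 1" "j \<le> k" "real k < N"
  shows "0 \<le> ffact_ratio j k N l"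
  unfolding ffact_ratio_def using assms
  by (intro divide_nonneg_nonneg mult_nonneg_nonneg less_imp_le ffact_pos) auto

lemma ffact_ratio_le:
  assumes "2 \<le> j" "j \<le> k" "j \<le> l + 1" "2 * real k \<le> N"
  shows "ffact_ratio j k N l \<le> 2 ^ k * ((real l + 1) / (N + real l)) ^ 2"
proof -
  define x where "x = (real l + 1) / (N + real l)"
  have N: "N \<ge> 4" "N + real l > 0" using assms by linarith+
  have x: "0 \<le> x" "x \<le> 1" using N unfolding x_def by auto
  have "ffact_ratio j k N l \<le> (real l + 1) ^ j * N ^ (k - j) / ((N + real l) / 2) ^ k"
    unfolding ffact_ratio_def using assms N
    by (intro frac_le mult_mono ffact_le_power power_le_ffact less_imp_le[OF ffact_pos])
       (auto simp: field_simps)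
  also have "\<dots> = 2 ^ k * (x ^ j * (N / (N + real l)) ^ (k - j))"
  proof -
    have "(N + real l) ^ k = (N + real l) ^ j * (N + real l) ^ (k - j)"
      using assms by (simp flip: power_add)
    then show ?thesis using N by (simp add: x_def field_simps)
  qed
  also have "\<dots> \<le> 2 ^ k * (x ^ 2 * 1)"
    using assms x N
    by (intro mult_left_mono mult_mono power_decreasing power_le_one) auto
  finally show ?thesis by (simp add: x_def)
qed

section \<open>A partition of the unit interval\<close>

definition cell :: "real \<Rightarrow> nat \<Rightarrow> real set" where
  "cell N l = {real l / (N + real l) ..< (real l + 1) / (N + real l + 1)}"

lemma le_divide_add_iff:
  fixes N t u :: real
  assumes "0 < N" "0 \<le> t" "u < 1"
  shows "t \<le> N * u / (1 - u) \<longleftrightarrow> t / (N + t) \<le> u"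
proof -
  have "0 < 1 - u" "0 < N + t" using assms by linarith+
  then show ?thesis by (simp add: pos_le_divide_eq pos_divide_le_eq algebra_simps)
qed

lemma mem_cell_iff:
  assumes "0 < N"
  shows "u \<in> cell N l \<longleftrightarrow> 0 \<le> u \<and> u < 1 \<and> real l \<le> N * u / (1 - u) \<and> N * u / (1 - u) < real l + 1"
proof -
  have "(real l + 1) / (N + real l + 1) < 1" "0 \<le> real l / (N + real l)"
    using assms by simp_all
  then have "u \<in> cell N l \<longleftrightarrow> 0 \<le> u \<and> u < 1 \<and> real l / (N + real l) \<le> u \<and> \<not> (real l + 1) / (N + (real l + 1)) \<le> u"
    unfolding cell_def by (auto simp: add.assoc intro: order_trans)
  also have "\<dots> \<longleftrightarrow> 0 \<le> u \<and> u < 1 \<and> real l \<le> N * u / (1 - u) \<and> \<not> real l + 1 \<le> N * u / (1 - u)"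
    using le_divide_add_iff[OF assms] by auto
  finally show ?thesis by (auto simp: not_le)
qed

lemma cell_index:
  assumes "0 < N" "u \<in> cell N l"
  shows "l = nat \<lfloor>N * u / (1 - u)\<rfloor>"
proof -
  have "\<lfloor>N * u / (1 - u)\<rfloor> = int l"
    using assms by (simp add: mem_cell_iff floor_eq_iff)
  then show ?thesis by simp
qed

lemma mem_cell_index:
  assumes "0 < N" "0 \<le> u" "u < 1"
  shows "u \<in> cell N (nat \<lfloor>N * u / (1 - u)\<rfloor>)"
proof -
  have "0 \<le> N * u / (1 - u)" using assms by simp
  then show ?thesis using assms by (auto simp: mem_cell_iff floor_le_iff)
qed

lemma disjoint_family_cell:
  assumes "0 < N"
  shows "disjoint_family (\<lambda>i. cell N (i + m))"
proof -
  have "a = b" if "u \<in> cell N (a + m)" "u \<in> cell N (b + m)" for u a b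
    using cell_index[OF assms that(1)] cell_index[OF assms that(2)] by simp
  then show ?thesis by (auto simp: disjoint_family_on_def)
qed

lemma cell_subset:
  assumes "0 < N" "1 \<le> l"
  shows "cell N l \<subseteq> {0<..<1}"
proof
  fix u assume u: "u \<in> cell N l"
  have "0 < real l / (N + real l)" using assms by simp
  also have "\<dots> \<le> u" using u by (simp add: cell_def)
  finally show "u \<in> {0<..<1}" using u mem_cell_iff[OF assms(1)] by simp
qed

lemma cell_le:
  assumes "0 < N" "1 \<le> l" "u \<in> cell N l"
  shows "u \<le> 2 * (real l / N)"
proof -
  have "u < (real l + 1) / (N + real l + 1)" using assms(3) by (simp add: cell_def)
  also have "\<dots> \<le> (real l + 1) / N" using assms by (intro divide_left_mono) auto
  also have "\<dots> \<le> 2 * (real l / N)" using assms by (simp add: divide_right_mono)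
  finally show ?thesis by simp
qed

lemma sets_cell [measurable]: "cell N l \<in> sets borel"
  by (simp add: cell_def)

lemma emeasure_cell_finite: "emeasure lborel (cell N l) < \<infinity>"
proof -
  have "cell N l \<subseteq> {real l / (N + real l) .. (real l + 1) / (N + real l + 1)}"
    by (auto simp: cell_def)
  then show ?thesis by (intro emeasure_bounded_finite bounded_subset[OF bounded_closed_interval])
qed

lemma measure_cell:
  assumes "0 < N"
  shows "measure lborel (cell N l) = N / ((N + real l) * (N + real l + 1))"
proof -
  have "(real l + 1) / (N + real l + 1) - real l / (N + real l) = N / ((N + real l) * (N + real l + 1))"
    using assms by (simp add: field_simps)
  moreover have "0 \<le> N / ((N + real l) * (N + real l + 1))" using assms by simp
  ultimately show ?thesis by (simp add: cell_def)
qed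

lemma
  fixes A :: "nat \<Rightarrow> 'a set" and c :: "nat \<Rightarrow> real"
  assumes disj: "disjoint_family A" and sets: "\<And>i. A i \<in> sets M"
    and fin: "\<And>i. emeasure M (A i) < \<infinity>"
    and summable: "summable (\<lambda>i. measure M (A i) * \<bar>c i\<bar>)"
  shows integrable_indicator_series: "integrable M (\<lambda>x. \<Sum>i. indicator (A i) x * c i)"
    and sums_integral_indicator_series:
      "(\<lambda>i. measure M (A i) * c i) sums (\<integral>x. (\<Sum>i. indicator (A i) x * c i) \<partial>M)"
proof -
  have int: "integrable M (\<lambda>x. indicator (A i) x * c i)" for i
    using sets fin by simp
  have "summable (\<lambda>i. norm (indicator (A i) x * c i))" for x
  proof (rule summable_finite)
    show "finite {i. x \<in> A i}"
    proof (cases "\<exists>i. x \<in> A i")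
      case True
      then obtain i where "x \<in> A i" by blast
      with disj have "{i. x \<in> A i} \<subseteq> {i}" by (auto simp: disjoint_family_on_def)
      then show ?thesis using finite_subset by blast
    qed simp
  qed (simp add: indicator_def)
  then have pointwise: "AE x in M. summable (\<lambda>i. norm (indicator (A i) x * c i))" by simp
  have space: "A i \<inter> space M = A i" for i
    using sets.Int_space_eq2[OF sets] .
  have "(\<integral>x. norm (indicator (A i) x * c i) \<partial>M) = measure M (A i) * \<bar>c i\<bar>" for i
    by (simp add: abs_mult space)
  then have total: "summable (\<lambda>i. \<integral>x. norm (indicator (A i) x * c i) \<partial>M)"
    using summable by simp
  show "integrable M (\<lambda>x. \<Sum>i. indicator (A i) x * c i)"
    by (rule integrable_suminf[OF int pointwise total])
  have "integral\<^sup>L M (\<lambda>x. indicator (A i) x * c i) = measure M (A i) * c i" for i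
    by (simp add: space)
  then show "(\<lambda>i. measure M (A i) * c i) sums (\<integral>x. (\<Sum>i. indicator (A i) x * c i) \<partial>M)"
    using sums_integral[OF int pointwise total] by (simp add: space)
qed

lemma tendsto_nat_floor_mult_divide:
  assumes "0 \<le> y"
  shows "((\<lambda>N. real (nat \<lfloor>N * y\<rfloor>) / N) \<longlongrightarrow> y) at_top"
proof (rule tendsto_sandwich)
  have "((\<lambda>N. y - 1 / N) \<longlongrightarrow> y - 0) at_top"
    by (intro tendsto_diff tendsto_const tendsto_divide_0[OF tendsto_const]
        filterlim_at_top_imp_at_infinity filterlim_ident)
  then show "((\<lambda>N. y - 1 / N) \<longlongrightarrow> y) at_top" by simp
  show "\<forall>\<^sub>F N in at_top. y - 1 / N \<le> real (nat \<lfloor>N * y\<rfloor>) / N"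
    using eventually_gt_at_top[of 0]
  proof eventually_elim
    case (elim N)
    have "y - 1 / N = (N * y - 1) / N" using elim by (simp add: field_simps)
    also have "\<dots> \<le> real (nat \<lfloor>N * y\<rfloor>) / N"
      using elim by (intro divide_right_mono) linarith+
    finally show ?case .
  qed
  show "\<forall>\<^sub>F N in at_top. real (nat \<lfloor>N * y\<rfloor>) / N \<le> y"
    using eventually_gt_at_top[of 0]
  proof eventually_elim
    case (elim N)
    have "real (nat \<lfloor>N * y\<rfloor>) \<le> N * y" using elim assms by simp
    then show ?case using elim by (simp add: divide_le_eq mult.commute)
  qed
qed simp

lemma filterlim_nat_floor_mult_at_top:
  assumes "0 < y"
  shows "filterlim (\<lambda>N::real. nat \<lfloor>N * y\<rfloor>) at_top at_top"
proof -
  have "filterlim (\<lambda>N::real. N * y) at_top at_top"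
    using assms by (intro filterlim_at_top_mult_tendsto_pos[OF tendsto_const] filterlim_ident)
  then show ?thesis
    by (rule filterlim_compose[OF filterlim_nat_sequentially filterlim_compose[OF filterlim_floor_sequentially]])
qed

lemma tendsto_add_divide_self:
  fixes x :: "real \<Rightarrow> real"
  assumes "((\<lambda>N. x N / N) \<longlongrightarrow> y) at_top"
  shows "((\<lambda>N. (N + x N) / N) \<longlongrightarrow> 1 + y) at_top"
proof -
  have "\<forall>\<^sub>F N in at_top. 1 + x N / N = (N + x N) / N"
    using eventually_gt_at_top[of 0] by eventually_elim (simp add: field_simps)
  with tendsto_add[OF tendsto_const assms] show ?thesis by (rule tendsto_cong[THEN iffD1, rotated])
qed

lemma uniform_limit_dilation:
  fixes g :: "real \<Rightarrow> 'a::metric_space"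
  assumes "(g \<longlongrightarrow> L) at_top" "0 < c"
  shows "uniform_limit {n. c \<le> n} (\<lambda>K n. g (K * n)) (\<lambda>_. L) at_top"
  unfolding uniform_limit_iff
proof (intro allI impI)
  fix e :: real assume "0 < e"
  then obtain M where M: "\<And>N. M \<le> N \<Longrightarrow> dist (g N) L < e"
    using assms(1) by (auto simp: tendsto_iff eventually_at_top_linorder)
  show "\<forall>\<^sub>F K in at_top. \<forall>n\<in>{n. c \<le> n}. dist (g (K * n)) L < e"
    using eventually_ge_at_top[of "max 0 (M / c)"]
  proof eventually_elim
    case (elim K)
    have "M \<le> K * n" if "c \<le> n" for n
    proof -
      have "M \<le> K * c" using elim assms by (simp add: divide_le_eq)
      also have "\<dots> \<le> K * n" using elim that by (intro mult_left_mono) auto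
      finally show ?thesis .
    qed
    then show ?case using M by blast
  qed
qed

lemma uniform_limit_weighted_dilation:
  fixes g w :: "real \<Rightarrow> real"
  assumes "(g \<longlongrightarrow> L) at_top" "0 < c" "bounded (w ` {n. c \<le> n})"
  shows "uniform_limit {n. c \<le> n} (\<lambda>K n. w n * g (K * n)) (\<lambda>n. w n * L) at_top"
proof -
  have "bounded ((\<lambda>_. L) ` {n. c \<le> n})" by (simp add: image_constant_conv)
  then show ?thesis
    using bounded_bilinear.bounded_uniform_limit[OF bounded_bilinear_mult
        uniform_limit_const[where c = w] uniform_limit_dilation[OF assms(1,2)]] assms(3)
    by simp
qed

lemma bounded_mult_powr_image:
  fixes a b c :: real
  assumes "0 < c" "a \<le> 0"
  shows "bounded ((\<lambda>n. b * n powr a) ` {n. c \<le> n})"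
proof -
  have "\<bar>b * n powr a\<bar> \<le> \<bar>b\<bar> * c powr a" if "c \<le> n" for n
    using that assms by (auto simp: abs_mult intro!: mult_left_mono powr_mono2')
  then show ?thesis by (auto simp: bounded_real)
qed

lemma integrable_indicator_powr:
  assumes "-1 < a"
  shows "integrable lborel (\<lambda>u::real. indicator {0<..1} u * u powr a)"
proof -
  have "(\<lambda>u. u powr a) integrable_on {0<..1::real}"
    by (rule integrable_on_powr_from_0') (use assms in auto)
  then have "set_integrable lebesgue {0<..1::real} (\<lambda>u. u powr a)"
    by (intro nonnegative_absolutely_integrable_1) auto
  then show ?thesis
    unfolding set_integrable_def by (subst (asm) integrable_completion) (simp_all add: mult.commute)
qed

lemma powr_le_twice_powr:
  fixes a x u :: real
  assumes "-1 \<le> a" "a \<le> 0" "0 < u" "u \<le> 2 * x"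
  shows "x powr a \<le> 2 * u powr a"
proof -
  have x: "0 < x" using assms by linarith
  have "x powr a = 2 powr (-a) * (2 * x) powr a"
    using x by (simp add: powr_mult powr_minus field_simps)
  also have "\<dots> \<le> 2 powr 1 * u powr a"
    using assms by (intro mult_mono powr_mono powr_mono2') auto
  finally show ?thesis by simp
qed

lemma powr_scaling:
  fixes a L N :: real
  assumes "0 < N" "0 < L"
  shows "N powr a * L powr (-(1 + a)) * L ^ 2 / N = (L / N) powr (1 - a)"
proof -
  have "L ^ 2 = L powr 2" using assms by simp
  then have L: "L powr (-(1 + a)) * L ^ 2 = L powr (1 - a)"
    by (simp flip: powr_add)
  have N: "N powr a / N = N powr (a - 1)"
    using assms by (simp add: powr_diff)
  have "(L / N) powr (1 - a) = L powr (1 - a) / N powr (1 - a)"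
    by (rule powr_divide)
  then have LN: "(L / N) powr (1 - a) = N powr (a - 1) * L powr (1 - a)"
    using powr_minus[of N "1 - a"] by (simp add: divide_inverse)
  have "N powr a * L powr (-(1 + a)) * L ^ 2 / N = (N powr a / N) * (L powr (-(1 + a)) * L ^ 2)"
    by (simp add: divide_inverse mult_ac)
  then show ?thesis unfolding L N LN .
qed

lemma square_ratio_mult_le:
  fixes N L :: real
  assumes N0: "0 < N" and L1: "1 \<le> L"
  shows "((L + 1) / (N + L)) ^ 2 * ((N + L) * (N + L + 1) / N) \<le> 8 * L ^ 2 / N"
proof -
  have cancel1: "(a / D) ^ 2 * (D * c / N) = a ^ 2 * c / (D * N)" if "D \<noteq> 0" for a c D :: real
    using that by (simp add: power2_eq_square field_simps)
  have cancel2: "(2 * x) ^ 2 * (2 * D) / (D * N) = 8 * x ^ 2 / N" if "D \<noteq> 0" for x D :: real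
    using that N0 by (simp add: power2_eq_square field_simps)
  have "((L + 1) / (N + L)) ^ 2 * ((N + L) * (N + L + 1) / N)
      = (L + 1) ^ 2 * (N + L + 1) / ((N + L) * N)"
    by (rule cancel1) (use N0 L1 in simp)
  also have "\<dots> \<le> (2 * L) ^ 2 * (2 * (N + L)) / ((N + L) * N)"
  proof -
    have "(L + 1) ^ 2 \<le> (2 * L) ^ 2" using L1 by (intro power_mono) auto
    moreover have "N + L + 1 \<le> 2 * (N + L)" using N0 L1 by simp
    ultimately show ?thesis using N0 L1 by (intro divide_right_mono mult_mono) auto
  qed
  also have "\<dots> = 8 * L ^ 2 / N"
    by (rule cancel2) (use N0 L1 in simp)
  finally show ?thesis .
qed

section \<open>The series as the integral of a step function\<close>

locale power_law_tail =
  fixes p :: "nat \<Rightarrow> real" and \<alpha> p0 :: real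
  assumes alpha_gt_1: "1 < \<alpha>" and alpha_lt_2: "\<alpha> < 2"
    and p_nonneg: "\<And>l. 1 \<le> l \<Longrightarrow> 0 \<le> p l"
    and p_asymp: "p \<sim>[at_top] (\<lambda>l. p0 * real l powr (-(1 + \<alpha>)))"
begin

lemma tendsto_p_mult_powr: "((\<lambda>l. p l * real l powr (1 + \<alpha>)) \<longlongrightarrow> p0) at_top"
proof -
  have "(\<lambda>l. p l * real l powr (1 + \<alpha>))
      \<sim>[at_top] (\<lambda>l. p0 * real l powr (-(1 + \<alpha>)) * real l powr (1 + \<alpha>))"
    by (intro asymp_equiv_mult p_asymp asymp_equiv_refl)
  also have "\<dots> \<sim>[at_top] (\<lambda>_. p0)"
    using eventually_gt_at_top[of "0::nat"]
    by (intro asymp_equiv_refl_ev, eventually_elim) (simp add: mult.assoc flip: powr_add)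
  finally show ?thesis by (rule asymp_equivD_const)
qed

lemma p_le_powr:
  obtains P where "0 < P" "\<And>l. 1 \<le> l \<Longrightarrow> p l \<le> P * real l powr (-(1 + \<alpha>))"
proof -
  have "Bseq (\<lambda>l. p l * real l powr (1 + \<alpha>))"
    using tendsto_p_mult_powr convergent_imp_Bseq convergent_def by blast
  then obtain P where P: "0 < P" "\<And>l. norm (p l * real l powr (1 + \<alpha>)) \<le> P"
    unfolding Bseq_def by blast
  have "p l \<le> P * real l powr (-(1 + \<alpha>))" if "1 \<le> l" for l
  proof -
    have "p l * real l powr (1 + \<alpha>) \<le> P" using P(2)[of l] by simp
    then have "p l \<le> P / real l powr (1 + \<alpha>)"
      using that by (simp add: pos_le_divide_eq)
    then show ?thesis using powr_minus[of "real l" "1 + \<alpha>"] by (simp add: divide_inverse)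
  qed
  with P(1) that show ?thesis by blast
qed

end

locale power_law_series = power_law_tail +
  fixes j k :: nat
  assumes two_le_j: "2 \<le> j" and j_le_k: "j \<le> k"
begin

definition binom_series :: "real \<Rightarrow> real" where
  "binom_series N = (\<Sum>i. let l = i + (j - 1) in
     p l * (((N + real l - real k) gchoose (l + 1 - j)) / ((N + real l) gchoose (l + 1))))"

definition height :: "real \<Rightarrow> nat \<Rightarrow> real" where
  "height N l = N powr \<alpha> * p l * ffact_ratio j k N l / measure lborel (cell N l)"

definition step :: "real \<Rightarrow> real \<Rightarrow> real" where
  "step N u = (\<Sum>i. indicator (cell N (i + (j - 1))) u * height N (i + (j - 1)))"

definition beta_kernel :: "real \<Rightarrow> real" where
  "beta_kernel u = u ^ j * (1 - u) ^ (k - j) * (u powr (1 - \<alpha>) * (1 - u) powr (\<alpha> - 1)) / u ^ 2"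

lemma height_eq:
  "0 < N \<Longrightarrow> height N l = N powr \<alpha> * p l * ffact_ratio j k N l * ((N + real l) * (N + real l + 1) / N)"
  by (simp add: height_def measure_cell)

lemma height_nonneg: "2 * real k \<le> N \<Longrightarrow> j \<le> l + 1 \<Longrightarrow> 0 \<le> height N l"
  using ffact_ratio_nonneg[of j l k N] p_nonneg[of l] two_le_j j_le_k
  by (simp add: height_eq)

lemma measure_cell_mult_height:
  assumes "real k < N" "j \<le> l + 1"
  shows "measure lborel (cell N l) * height N l
    = N powr \<alpha> * (p l * (((N + real l - real k) gchoose (l + 1 - j)) / ((N + real l) gchoose (l + 1))))"
proof -
  have "measure lborel (cell N l) \<noteq> 0" using assms by (simp add: measure_cell)
  moreover have "((N + real l - real k) gchoose (l + 1 - j)) / ((N + real l) gchoose (l + 1))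
      = ffact_ratio j k N l"
    unfolding ffact_ratio_def using assms j_le_k by (intro gbinomial_ratio_eq_ffact) auto
  ultimately show ?thesis by (simp add: height_def)
qed

lemma measure_cell_mult_height_le:
  assumes N: "2 * real k \<le> N" and l: "j \<le> l + 1"
    and P: "\<And>l. 1 \<le> l \<Longrightarrow> p l \<le> P * real l powr (-(1 + \<alpha>))"
  shows "measure lborel (cell N l) * height N l \<le> N powr \<alpha> * P * 2 ^ k * real l powr (-(1 + \<alpha>))"
proof -
  have N0: "0 < N" and kN: "real k < N" and l1: "1 \<le> l"
    using N l two_le_j j_le_k by linarith+
  have "((real l + 1) / (N + real l)) ^ 2 \<le> 1"
    using N two_le_j j_le_k by (intro power_le_one) auto
  then have "2 ^ k * ((real l + 1) / (N + real l)) ^ 2 \<le> 2 ^ k"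
    by (intro mult_left_le) auto
  with ffact_ratio_le[OF two_le_j j_le_k l N] have ratio: "ffact_ratio j k N l \<le> 2 ^ k"
    by linarith
  have "measure lborel (cell N l) * height N l = N powr \<alpha> * p l * ffact_ratio j k N l"
    using N0 by (simp add: height_def measure_cell)
  also have "\<dots> \<le> N powr \<alpha> * (P * real l powr (-(1 + \<alpha>))) * 2 ^ k"
    using P[OF l1] ratio ffact_ratio_nonneg[OF l j_le_k kN] p_nonneg[OF l1]
    by (intro mult_mono mult_left_mono) auto
  finally show ?thesis by (simp add: ac_simps)
qed

lemma integral_step:
  assumes N: "2 * real k \<le> N"
  shows "integrable lborel (step N)" "integral\<^sup>L lborel (step N) = N powr \<alpha> * binom_series N"
proof -
  have N0: "0 < N" and kN: "real k < N" using N two_le_j j_le_k by linarith+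
  define A where "A i = cell N (i + (j - 1))" for i
  define c where "c i = height N (i + (j - 1))" for i
  have step: "step N = (\<lambda>u. \<Sum>i. indicator (A i) u * c i)"
    by (intro ext) (simp add: step_def A_def c_def)
  have disj: "disjoint_family A" and sets: "A i \<in> sets lborel" and fin: "emeasure lborel (A i) < \<infinity>"
    for i unfolding A_def using disjoint_family_cell[OF N0] emeasure_cell_finite by simp_all
  obtain P where P: "0 < P" "\<And>l. 1 \<le> l \<Longrightarrow> p l \<le> P * real l powr (-(1 + \<alpha>))"
    using p_le_powr by blast
  have "summable (\<lambda>i. N powr \<alpha> * P * 2 ^ k * real (i + (j - 1)) powr (-(1 + \<alpha>)))"
    using summable_iff_shift[of "\<lambda>n. real n powr (-(1 + \<alpha>))" "j - 1"] summable_real_powr_iff alpha_gt_1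
    by (simp add: summable_mult mult.assoc)
  moreover have "norm (measure lborel (A i) * \<bar>c i\<bar>)
      \<le> N powr \<alpha> * P * 2 ^ k * real (i + (j - 1)) powr (-(1 + \<alpha>))" for i
  proof -
    have l: "j \<le> i + (j - 1) + 1" by simp
    show ?thesis
      using measure_cell_mult_height_le[OF N l P(2)] height_nonneg[OF N l] by (simp add: A_def c_def)
  qed
  ultimately have summable: "summable (\<lambda>i. measure lborel (A i) * \<bar>c i\<bar>)"
    by (rule summable_comparison_test')
  show "integrable lborel (step N)"
    unfolding step by (rule integrable_indicator_series[OF disj sets fin summable])
  have "(\<lambda>i. N powr \<alpha> * (let l = i + (j - 1) in
      p l * (((N + real l - real k) gchoose (l + 1 - j)) / ((N + real l) gchoose (l + 1)))))
      sums integral\<^sup>L lborel (step N)"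
    using sums_integral_indicator_series[OF disj sets fin summable] measure_cell_mult_height[OF kN]
    unfolding step by (simp add: A_def c_def Let_def)
  then have "(\<lambda>i. let l = i + (j - 1) in
      p l * (((N + real l - real k) gchoose (l + 1 - j)) / ((N + real l) gchoose (l + 1))))
      sums (integral\<^sup>L lborel (step N) / N powr \<alpha>)"
    using sums_divide[where c = "N powr \<alpha>"] N0 by fastforce
  then show "integral\<^sup>L lborel (step N) = N powr \<alpha> * binom_series N"
    using N0 unfolding binom_series_def by (simp add: sums_iff)
qed

lemma height_le:
  assumes N: "2 * real k \<le> N" and l: "j \<le> l + 1" and u: "u \<in> cell N l"
    and P: "0 < P" "\<And>l. 1 \<le> l \<Longrightarrow> p l \<le> P * real l powr (-(1 + \<alpha>))"
  shows "height N l \<le> 2 ^ (k + 4) * P * u powr (1 - \<alpha>)"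
proof -
  define L where "L = real l"
  have N0: "0 < N" and L1: "1 \<le> L" and l1: "1 \<le> l"
    using N l two_le_j j_le_k by (simp_all add: L_def)
  have p: "0 \<le> p l" "p l \<le> P * L powr (-(1 + \<alpha>))"
    using p_nonneg[OF l1] P(2)[OF l1] by (simp_all add: L_def)
  have P0: "0 \<le> P" using P(1) by simp
  have shape: "((L + 1) / (N + L)) ^ 2 * ((N + L) * (N + L + 1) / N) \<le> 8 * L ^ 2 / N"
    using N0 L1 by (rule square_ratio_mult_le)
  have "height N l \<le> N powr \<alpha> * (P * L powr (-(1 + \<alpha>))) * (2 ^ k * ((L + 1) / (N + L)) ^ 2)
      * ((N + L) * (N + L + 1) / N)"
    unfolding height_eq[OF N0] L_def[symmetric]
    using ffact_ratio_le[OF two_le_j j_le_k l N] ffact_ratio_nonneg[OF l j_le_k] p N0 L1 N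
    by (intro mult_right_mono mult_mono) (auto simp: L_def)
  also have "\<dots> = 2 ^ k * P * (N powr \<alpha> * L powr (-(1 + \<alpha>)))
      * (((L + 1) / (N + L)) ^ 2 * ((N + L) * (N + L + 1) / N))"
    by (simp only: ac_simps)
  also have "\<dots> \<le> 2 ^ k * P * (N powr \<alpha> * L powr (-(1 + \<alpha>))) * (8 * L ^ 2 / N)"
    using shape P0 by (intro mult_left_mono) auto
  also have "\<dots> = 2 ^ k * P * (8 * (N powr \<alpha> * L powr (-(1 + \<alpha>)) * L ^ 2 / N))"
    by (simp add: divide_inverse mult_ac)
  also have "\<dots> = 2 ^ k * P * (8 * (L / N) powr (1 - \<alpha>))"
    using N0 L1 by (simp only: powr_scaling)
  also have "\<dots> \<le> 2 ^ k * P * (8 * (2 * u powr (1 - \<alpha>)))"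
    using powr_le_twice_powr[of "1 - \<alpha>" u "L / N"] cell_subset[OF N0 l1] cell_le[OF N0 l1 u]
      u alpha_gt_1 alpha_lt_2 P0
    by (intro mult_left_mono) (auto simp: L_def)
  finally show ?thesis by (simp add: power_add)
qed

lemma step_eq:
  assumes N: "0 < N"
  shows "step N u = (if 0 \<le> u \<and> u < 1 \<and> j \<le> nat \<lfloor>N * u / (1 - u)\<rfloor> + 1
                      then height N (nat \<lfloor>N * u / (1 - u)\<rfloor>) else 0)"
    (is "_ = ?c")
proof -
  define l0 where "l0 = nat \<lfloor>N * u / (1 - u)\<rfloor>"
  have "indicator (cell N (i + (j - 1))) u * height N (i + (j - 1)) = (if i = l0 - (j - 1) then ?c else 0)"
    for i
  proof (cases "u \<in> cell N (i + (j - 1))")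
    case True
    then have "i + (j - 1) = l0" "0 \<le> u" "u < 1"
      using cell_index[OF N] mem_cell_iff[OF N] by (auto simp: l0_def)
    then show ?thesis using True two_le_j by (auto simp: l0_def)
  next
    case False
    have "?c = 0" if "i = l0 - (j - 1)"
      using False mem_cell_index[OF N] that by (auto simp: l0_def)
    then show ?thesis using False by simp
  qed
  then have "step N u = (\<Sum>i. if i = l0 - (j - 1) then ?c else 0)"
    by (simp add: step_def)
  also have "\<dots> = ?c" by (rule sums_unique[OF sums_single, symmetric])
  finally show ?thesis .
qed

lemma step_bound:
  assumes N: "2 * real k \<le> N" and P: "0 < P" "\<And>l. 1 \<le> l \<Longrightarrow> p l \<le> P * real l powr (-(1 + \<alpha>))"
  shows "\<bar>step N u\<bar> \<le> 2 ^ (k + 4) * P * (indicator {0<..1} u * u powr (1 - \<alpha>))"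
proof -
  have N0: "0 < N" using N two_le_j j_le_k by linarith
  define l0 where "l0 = nat \<lfloor>N * u / (1 - u)\<rfloor>"
  show ?thesis
  proof (cases "0 \<le> u \<and> u < 1 \<and> j \<le> l0 + 1")
    case True
    then have u: "u \<in> cell N l0" using mem_cell_index[OF N0] by (simp add: l0_def)
    moreover have "1 \<le> l0" using True two_le_j by linarith
    ultimately have "u \<in> {0<..<1}" using cell_subset[OF N0] by blast
    moreover have "step N u = height N l0"
      using True by (simp add: step_eq[OF N0] l0_def[symmetric])
    ultimately show ?thesis
      using True height_nonneg[OF N] height_le[OF N _ u P] by simp
  next
    case False
    then have "step N u = 0" by (auto simp: step_eq[OF N0] l0_def[symmetric])
    then show ?thesis using P(1) by simp
  qed
qed

lemma height_eq_scaled: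
  assumes N: "real k < N" and l: "1 \<le> l"
  shows "height N l = (p l * real l powr (1 + \<alpha>)) * (real l / N) powr (-(1 + \<alpha>))
    * (ffact (real l + 1) j / N ^ j * (ffact (N - 1) (k - j) / N ^ (k - j)) / (ffact (N + real l) k / N ^ k))
    * ((N + real l) / N * ((N + real l + 1) / N))"
    (is "_ = ?p * ?t * ?r * ?s")
proof -
  have N0: "0 < N" using N by linarith
  have "?t = real l powr (-(1 + \<alpha>)) / N powr (-(1 + \<alpha>))"
    by (rule powr_divide)
  also have "\<dots> = real l powr (-(1 + \<alpha>)) * N powr (1 + \<alpha>)"
    using powr_minus[of N "-(1 + \<alpha>)"] by (simp add: divide_inverse add.commute)
  finally have "?p * ?t = p l * (real l powr (1 + \<alpha>) * real l powr (-(1 + \<alpha>))) * N powr (1 + \<alpha>)"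
    by (simp only: mult_ac)
  also have "real l powr (1 + \<alpha>) * real l powr (-(1 + \<alpha>)) = 1"
    using l by (simp flip: powr_add)
  finally have pt: "?p * ?t = p l * N powr (1 + \<alpha>)" by simp
  have "N ^ j * N ^ (k - j) = N ^ k" using j_le_k by (simp flip: power_add)
  moreover have "ffact (N + real l) k \<noteq> 0" using ffact_pos[of k "N + real l"] N by simp
  ultimately have r: "?r = ffact_ratio j k N l"
    using N0 by (simp add: ffact_ratio_def field_simps)
  have s: "N powr (1 + \<alpha>) * ?s = N powr \<alpha> * ((N + real l) * (N + real l + 1) / N)"
    using N0 by (simp add: powr_add field_simps power2_eq_square)
  have "?p * ?t * ?r * ?s = p l * ffact_ratio j k N l * (N powr (1 + \<alpha>) * ?s)"
    unfolding pt r by (simp only: mult_ac)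
  then show ?thesis
    unfolding s height_eq[OF N0] by (simp only: mult_ac)
qed

lemma beta_kernel_eq:
  assumes u: "0 < u" "u < 1"
  shows "(u / (1 - u)) powr (-(1 + \<alpha>)) * ((u / (1 - u)) ^ j / (1 + u / (1 - u)) ^ k)
      * ((1 + u / (1 - u)) * (1 + u / (1 - u))) = beta_kernel u"
proof -
  define b where "b = 1 - u"
  have b: "0 < b" using u by (simp add: b_def)
  have one_plus: "1 + u / b = 1 / b" using b by (simp add: b_def field_simps)
  have "u powr (-(1 + \<alpha>)) = u powr ((1 - \<alpha>) - 2)" by (simp add: algebra_simps)
  also have "\<dots> = u powr (1 - \<alpha>) / u powr 2" by (rule powr_diff)
  also have "u powr 2 = u ^ 2" using u by simp
  finally have pu: "u powr (-(1 + \<alpha>)) = u powr (1 - \<alpha>) / u ^ 2" .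
  have "b powr (1 + \<alpha>) = b powr ((\<alpha> - 1) + 2)" by (simp add: algebra_simps)
  also have "\<dots> = b powr (\<alpha> - 1) * b powr 2" by (rule powr_add)
  also have "b powr 2 = b ^ 2" using b by simp
  finally have pb: "b powr (-(1 + \<alpha>)) = 1 / (b powr (\<alpha> - 1) * b ^ 2)"
    using powr_minus[of b "1 + \<alpha>"] by (simp add: divide_inverse)
  have "(u / b) powr (-(1 + \<alpha>)) = u powr (1 - \<alpha>) / u ^ 2 * (b powr (\<alpha> - 1) * b ^ 2)"
    unfolding powr_divide pu pb by simp
  moreover have "b ^ k = b ^ j * b ^ (k - j)" using j_le_k by (simp flip: power_add)
  ultimately show ?thesis
    using u b unfolding beta_kernel_def b_def[symmetric] one_plus
    by (simp add: field_simps power2_eq_square)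
qed

lemma tendsto_height_floor:
  assumes y: "0 < y"
  shows "((\<lambda>N. height N (nat \<lfloor>N * y\<rfloor>))
    \<longlongrightarrow> p0 * y powr (-(1 + \<alpha>)) * (y ^ j / (1 + y) ^ k) * ((1 + y) * (1 + y))) at_top"
proof -
  define l where "l N = nat \<lfloor>N * y\<rfloor>" for N :: real
  have t: "((\<lambda>N. real (l N) / N) \<longlongrightarrow> y) at_top"
    unfolding l_def using y by (intro tendsto_nat_floor_mult_divide) simp
  have inv: "((\<lambda>N::real. c / N) \<longlongrightarrow> 0) at_top" for c :: real
    by (intro tendsto_divide_0[OF tendsto_const] filterlim_at_top_imp_at_infinity filterlim_ident)
  have lim_p: "((\<lambda>N. p (l N) * real (l N) powr (1 + \<alpha>)) \<longlongrightarrow> p0) at_top"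
    unfolding l_def by (rule filterlim_compose[OF tendsto_p_mult_powr filterlim_nat_floor_mult_at_top[OF y]])
  have lim_t: "((\<lambda>N. (real (l N) / N) powr (-(1 + \<alpha>))) \<longlongrightarrow> y powr (-(1 + \<alpha>))) at_top"
    using y by (intro tendsto_powr[OF t tendsto_const]) simp
  have "((\<lambda>N. (real (l N) + 1) / N) \<longlongrightarrow> y) at_top"
    using tendsto_add[OF t inv[of 1]] by (simp add: add_divide_distrib)
  then have lim_1: "((\<lambda>N. ffact (real (l N) + 1) j / N ^ j) \<longlongrightarrow> y ^ j) at_top"
    by (rule tendsto_ffact_divide_power)
  have "((\<lambda>N::real. (N - 1) / N) \<longlongrightarrow> 1) at_top"
    using tendsto_add_divide_self[OF inv[of "-1"]] by simp
  then have lim_2: "((\<lambda>N::real. ffact (N - 1) (k - j) / N ^ (k - j)) \<longlongrightarrow> 1 ^ (k - j)) at_top"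
    by (rule tendsto_ffact_divide_power)
  have lim_l: "((\<lambda>N. (N + real (l N)) / N) \<longlongrightarrow> 1 + y) at_top"
    by (rule tendsto_add_divide_self[OF t])
  then have lim_3: "((\<lambda>N. ffact (N + real (l N)) k / N ^ k) \<longlongrightarrow> (1 + y) ^ k) at_top"
    by (rule tendsto_ffact_divide_power)
  have lim_4: "((\<lambda>N. (N + real (l N) + 1) / N) \<longlongrightarrow> 1 + y + 0) at_top"
    using tendsto_add[OF lim_l inv[of 1]] by (simp add: add_divide_distrib)
  have "(1 + y) ^ k \<noteq> 0" using y by simp
  then have lim: "((\<lambda>N. (p (l N) * real (l N) powr (1 + \<alpha>)) * (real (l N) / N) powr (-(1 + \<alpha>))
      * (ffact (real (l N) + 1) j / N ^ j * (ffact (N - 1) (k - j) / N ^ (k - j))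
         / (ffact (N + real (l N)) k / N ^ k))
      * ((N + real (l N)) / N * ((N + real (l N) + 1) / N)))
      \<longlongrightarrow> p0 * y powr (-(1 + \<alpha>)) * (y ^ j * 1 ^ (k - j) / (1 + y) ^ k) * ((1 + y) * (1 + y + 0))) at_top"
    (is "(?F \<longlongrightarrow> _) _")
    by (intro tendsto_mult tendsto_divide lim_p lim_t lim_1 lim_2 lim_3 lim_l lim_4)
  have "\<forall>\<^sub>F N in at_top. ?F N = height N (l N)"
    using eventually_ge_at_top[of "real j / y"] eventually_gt_at_top[of "real k"]
  proof eventually_elim
    case (elim N)
    then have "real j \<le> N * y" using y j_le_k by (simp add: divide_le_eq)
    then have "1 \<le> l N" unfolding l_def using two_le_j by linarith
    then show ?case by (rule height_eq_scaled[OF elim(2), symmetric])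
  qed
  from tendsto_cong[OF this, THEN iffD1, OF lim] show ?thesis
    unfolding l_def by simp
qed

lemma tendsto_step:
  assumes u: "0 < u" "u < 1"
  shows "((\<lambda>N. step N u) \<longlongrightarrow> p0 * beta_kernel u) at_top"
proof -
  define y where "y = u / (1 - u)"
  have y: "0 < y" using u by (simp add: y_def)
  have "\<forall>\<^sub>F N in at_top. height N (nat \<lfloor>N * y\<rfloor>) = step N u"
    using eventually_ge_at_top[of "real j / y"] eventually_gt_at_top[of 0]
  proof eventually_elim
    case (elim N)
    then have "real j \<le> N * y" using y by (simp add: divide_le_eq)
    then have "j \<le> nat \<lfloor>N * y\<rfloor>" by linarith
    then show ?case using u elim by (simp add: step_eq y_def)
  qed
  from tendsto_cong[OF this, THEN iffD1, OF tendsto_height_floor[OF y]] show ?thesis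
    using beta_kernel_eq[OF u, folded y_def] by (simp only: mult.assoc)
qed

lemma tendsto_step_everywhere:
  "((\<lambda>N. step N u) \<longlongrightarrow> indicator {0..1} u * (p0 * beta_kernel u)) at_top"
proof (cases "0 < u \<and> u < 1")
  case True
  then show ?thesis using tendsto_step[of u] by simp
next
  case False
  then have "u \<notin> {0..1} \<or> u = 0 \<or> u = 1" by auto
  then have zero: "indicator {0..1} u * (p0 * beta_kernel u) = 0"
    using two_le_j by (auto simp: beta_kernel_def)
  have "\<forall>\<^sub>F N in at_top. step N u = indicator {0..1} u * (p0 * beta_kernel u)"
    unfolding zero using eventually_gt_at_top[of 0]
    by eventually_elim (use False two_le_j in \<open>auto simp: step_eq\<close>)
  then show ?thesis by (rule tendsto_eventually)
qed

lemma tendsto_binom_series: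
  "((\<lambda>N. N powr \<alpha> * binom_series N) \<longlongrightarrow> p0 * integral {0..1} beta_kernel) at_top"
proof -
  obtain P where P: "0 < P" "\<And>l. 1 \<le> l \<Longrightarrow> p l \<le> P * real l powr (-(1 + \<alpha>))"
    using p_le_powr by blast
  define f where "f u = indicator {0..1} u * (p0 * beta_kernel u)" for u :: real
  define w where "w u = 2 ^ (k + 4) * P * (indicator {0<..1} u * u powr (1 - \<alpha>))" for u :: real
  have meas_step: "step N \<in> borel_measurable lborel" for N
    unfolding step_def by measurable
  have meas_f: "f \<in> borel_measurable lborel"
    unfolding f_def beta_kernel_def by measurable
  have int_w: "integrable lborel w"
    unfolding w_def using alpha_lt_2 by (intro integrable_mult_right integrable_indicator_powr) simp
  have lim: "AE u in lborel. ((\<lambda>N. step N u) \<longlongrightarrow> f u) at_top"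
    unfolding f_def using tendsto_step_everywhere by simp
  have bound: "\<forall>\<^sub>F N in at_top. AE u in lborel. norm (step N u) \<le> w u"
    using eventually_ge_at_top[of "2 * real k"]
    by eventually_elim (use step_bound P in \<open>simp add: w_def\<close>)
  have "integrable lborel f"
    by (rule integrable_dominated_convergence_at_top[OF meas_f meas_step int_w lim bound])
  then have "set_integrable lborel {0..1} (\<lambda>u. p0 * beta_kernel u)"
    by (simp add: set_integrable_def f_def[abs_def])
  from set_borel_integral_eq_integral(2)[OF this]
  have "integral\<^sup>L lborel f = p0 * integral {0..1} beta_kernel"
    by (simp add: f_def[abs_def] set_lebesgue_integral_def mult.left_commute)
  moreover have "((\<lambda>N. integral\<^sup>L lborel (step N)) \<longlongrightarrow> integral\<^sup>L lborel f) at_top"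
    by (rule integral_dominated_convergence_at_top[OF meas_f meas_step int_w lim bound])
  moreover have "\<forall>\<^sub>F N in at_top. integral\<^sup>L lborel (step N) = N powr \<alpha> * binom_series N"
    using eventually_ge_at_top[of "2 * real k"] by eventually_elim (rule integral_step(2))
  ultimately show ?thesis by (simp add: tendsto_cong)
qed

lemma RjK_eq:
  assumes "0 < K" "0 < n"
  shows "RjK p \<alpha> b k j K n = b * n powr (1 - \<alpha>) * ((K * n) powr \<alpha> * binom_series (K * n))"
proof -
  have "n powr (1 - \<alpha>) * (K * n) powr \<alpha> = K powr \<alpha> * n"
    using assms by (simp add: powr_mult mult_ac flip: powr_add)
  then show ?thesis
    by (simp add: RjK_def binom_series_def mult_ac)
qed

lemma Rjn_eq: "Rjn p0 \<alpha> b k j n = b * n powr (1 - \<alpha>) * (p0 * integral {0..1} beta_kernel)"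
  using powr_minus_divide[of n "\<alpha> - 1"] by (simp add: Rjn_def beta_kernel_def[abs_def])

end

theorem lemma5:
  fixes b p0 \<alpha> c0 :: real and p :: "nat \<Rightarrow> real" and k j :: nat
  assumes "b > 0" and "p0 > 0" and "1 < \<alpha>" and "\<alpha> < 2"
    and "\<forall>l\<ge>1. p l \<ge> 0"
    and "(\<lambda>i. p (i + 1)) sums 1"
    and "p \<sim>[at_top] (\<lambda>l. p0 * real l powr (-(1 + \<alpha>)))"
    and "2 \<le> j" and "j \<le> k"
    and "c0 > 0"
  shows "uniform_limit {n. c0 / 2 \<le> n} (\<lambda>K n. RjK p \<alpha> b k j K n) (\<lambda>n. Rjn p0 \<alpha> b k j n) at_top"
proof -
  interpret power_law_series p \<alpha> p0 j k
    using assms by unfold_locales auto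
  have "uniform_limit {n. c0 / 2 \<le> n}
      (\<lambda>K n. b * n powr (1 - \<alpha>) * ((K * n) powr \<alpha> * binom_series (K * n)))
      (\<lambda>n. b * n powr (1 - \<alpha>) * (p0 * integral {0..1} beta_kernel)) at_top"
    using assms by (intro uniform_limit_weighted_dilation tendsto_binom_series bounded_mult_powr_image) auto
  moreover have "\<forall>\<^sub>F K in at_top. \<forall>n\<in>{n. c0 / 2 \<le> n}.
      b * n powr (1 - \<alpha>) * ((K * n) powr \<alpha> * binom_series (K * n)) = RjK p \<alpha> b k j K n"
    using eventually_gt_at_top[of 0]
    by eventually_elim (use assms(10) in \<open>auto simp: RjK_eq\<close>)
  ultimately show ?thesis
    by (simp add: uniform_limit_cong Rjn_eq)
qed

end
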